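(* Let $\Bbbk$ be a field of characteristic $0$ and let $J$ be a Jordan dialgebra over $\Bbbk$ generated by one element. Then $J$ is special, i.e. $J$ is isomorphic to a subdialgebra of $D^{(+)}$ for some associative dialgebra $D$.
   Context: A 0-dialgebra is a vector space with bilinear operations $\vdash,\dashv$ satisfying $(x\dashv y)\vdash z=(x\vdash y)\vdash z$ and $x\dashv(y\vdash z)=x\dashv(y\dashv z)$. For a nonassociative multilinear polynomial $f(x_1,\dots,x_n)$ and an index $i$, $f(x_1,\dots,\dot x_i,\dots,x_n)$ denotes the dialgebra polynomial obtained by replacing each product $uv$ in each monomial by $u\dashv v$ if $x_i$ occurs in $u$ and by $u\vdash v$ otherwise (i.e. all operation signs point to $x_i$). A Jordan dialgebra is a 0-dialgebra satisfying $x_1\vdash x_2=x_2\dashv x_1$ and $J(x_1,\dots,\dot x_i,\dots,x_4)=0$ for $i=1,2,3,4$, where $J(x_1,x_2,x_3,x_4)=x_1(x_2(x_3x_4))+(x_2(x_1x_3))x_4+x_3(x_2(x_1x_4))-(x_1x_2)(x_3x_4)-(x_1x_3)(x_2x_4)-(x_3x_2)(x_1x_4)$. An associative dialgebra is a dialgebra satisfying the two 0-identities and $(x\vdash y)\vdash z=x\vdash(y\vdash z)$, $(x\dashv y)\dashv z=x\dashv(y\dashv z)$, $(x\vdash y)\dashv z=x\vdash(y\dashv z)$; for such $D$, $D^{(+)}$ is $D$ with $a\vdash_+b=\tfrac12(a\vdash b+b\dashv a)$, $a\dashv_+b=\tfrac12(a\dashv b+b\vdash a)$. *)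

theory Defs
  imports Complex_Main "HOL-Library.Function_Algebras"
begin

datatype nmon = V nat | M nmon nmon

fun vars :: "nmon \<Rightarrow> nat set" where
  "vars (V j) = {j}"
| "vars (M u v) = vars u \<union> vars v"

text \<open>Evaluation of the dialgebra monomial obtained from a nonassociative monomial by
  pointing every operation sign to the variable with index i: a product u v becomes
  u -| v (operation dl) if x_i occurs in u, and u |- v (operation dr) otherwise.\<close>
fun eval_dot :: "('v \<Rightarrow> 'v \<Rightarrow> 'v) \<Rightarrow> ('v \<Rightarrow> 'v \<Rightarrow> 'v) \<Rightarrow> nat \<Rightarrow> (nat \<Rightarrow> 'v) \<Rightarrow> nmon \<Rightarrow> 'v" where
  "eval_dot dl dr i x (V j) = x j"
| "eval_dot dl dr i x (M u v) =
     (if i \<in> vars u then dl else dr) (eval_dot dl dr i x u) (eval_dot dl dr i x v)"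

definition J_dot :: "('v::ab_group_add \<Rightarrow> 'v \<Rightarrow> 'v) \<Rightarrow> ('v \<Rightarrow> 'v \<Rightarrow> 'v) \<Rightarrow> nat \<Rightarrow> (nat \<Rightarrow> 'v) \<Rightarrow> 'v" where
  "J_dot dl dr i x =
      eval_dot dl dr i x (M (V 1) (M (V 2) (M (V 3) (V 4))))
    + eval_dot dl dr i x (M (M (V 2) (M (V 1) (V 3))) (V 4))
    + eval_dot dl dr i x (M (V 3) (M (V 2) (M (V 1) (V 4))))
    - eval_dot dl dr i x (M (M (V 1) (V 2)) (M (V 3) (V 4)))
    - eval_dot dl dr i x (M (M (V 1) (V 3)) (M (V 2) (V 4)))
    - eval_dot dl dr i x (M (M (V 3) (V 2)) (M (V 1) (V 4)))"

text \<open>Convention: dl is the operation -| and dr is the operation |- .\<close>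

definition subspace_on :: "('k::field \<Rightarrow> 'v::ab_group_add \<Rightarrow> 'v) \<Rightarrow> 'v set \<Rightarrow> bool" where
  "subspace_on s A \<longleftrightarrow> 0 \<in> A \<and> (\<forall>x\<in>A. \<forall>y\<in>A. x + y \<in> A) \<and> (\<forall>c. \<forall>x\<in>A. s c x \<in> A)"

definition bilinear_on :: "('k::field \<Rightarrow> 'v::ab_group_add \<Rightarrow> 'v) \<Rightarrow> 'v set \<Rightarrow> ('v \<Rightarrow> 'v \<Rightarrow> 'v) \<Rightarrow> bool" where
  "bilinear_on s A m \<longleftrightarrow>
     (\<forall>x\<in>A. \<forall>y\<in>A. m x y \<in> A) \<and>
     (\<forall>x\<in>A. \<forall>y\<in>A. \<forall>z\<in>A. m (x + y) z = m x z + m y z \<and> m z (x + y) = m z x + m z y) \<and>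
     (\<forall>c. \<forall>x\<in>A. \<forall>y\<in>A. m (s c x) y = s c (m x y) \<and> m x (s c y) = s c (m x y))"

definition zero_dialgebra_on ::
  "('k::field \<Rightarrow> 'v::ab_group_add \<Rightarrow> 'v) \<Rightarrow> 'v set \<Rightarrow> ('v \<Rightarrow> 'v \<Rightarrow> 'v) \<Rightarrow> ('v \<Rightarrow> 'v \<Rightarrow> 'v) \<Rightarrow> bool" where
  "zero_dialgebra_on s A dl dr \<longleftrightarrow>
     vector_space s \<and> subspace_on s A \<and> bilinear_on s A dl \<and> bilinear_on s A dr \<and>
     (\<forall>x\<in>A. \<forall>y\<in>A. \<forall>z\<in>A. dr (dl x y) z = dr (dr x y) z \<and> dl x (dr y z) = dl x (dl y z))"

definition assoc_dialgebra_on ::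
  "('k::field \<Rightarrow> 'v::ab_group_add \<Rightarrow> 'v) \<Rightarrow> 'v set \<Rightarrow> ('v \<Rightarrow> 'v \<Rightarrow> 'v) \<Rightarrow> ('v \<Rightarrow> 'v \<Rightarrow> 'v) \<Rightarrow> bool" where
  "assoc_dialgebra_on s A dl dr \<longleftrightarrow>
     zero_dialgebra_on s A dl dr \<and>
     (\<forall>x\<in>A. \<forall>y\<in>A. \<forall>z\<in>A.
        dr (dr x y) z = dr x (dr y z) \<and>
        dl (dl x y) z = dl x (dl y z) \<and>
        dl (dr x y) z = dr x (dl y z))"

definition jordan_dialgebra_on ::
  "('k::field \<Rightarrow> 'v::ab_group_add \<Rightarrow> 'v) \<Rightarrow> 'v set \<Rightarrow> ('v \<Rightarrow> 'v \<Rightarrow> 'v) \<Rightarrow> ('v \<Rightarrow> 'v \<Rightarrow> 'v) \<Rightarrow> bool" where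
  "jordan_dialgebra_on s A dl dr \<longleftrightarrow>
     zero_dialgebra_on s A dl dr \<and>
     (\<forall>x\<in>A. \<forall>y\<in>A. dr x y = dl y x) \<and>
     (\<forall>x. (\<forall>j. x j \<in> A) \<longrightarrow> (\<forall>i\<in>{1..4}. J_dot dl dr i x = 0))"

inductive_set generated ::
  "('k \<Rightarrow> 'v::ab_group_add \<Rightarrow> 'v) \<Rightarrow> ('v \<Rightarrow> 'v \<Rightarrow> 'v) \<Rightarrow> ('v \<Rightarrow> 'v \<Rightarrow> 'v) \<Rightarrow> 'v set \<Rightarrow> 'v set"
  for s dl dr X where
  gen_base: "x \<in> X \<Longrightarrow> x \<in> generated s dl dr X"
| gen_zero: "0 \<in> generated s dl dr X"
| gen_add: "x \<in> generated s dl dr X \<Longrightarrow> y \<in> generated s dl dr X \<Longrightarrow> x + y \<in> generated s dl dr X"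
| gen_scale: "x \<in> generated s dl dr X \<Longrightarrow> s c x \<in> generated s dl dr X"
| gen_dl: "x \<in> generated s dl dr X \<Longrightarrow> y \<in> generated s dl dr X \<Longrightarrow> dl x y \<in> generated s dl dr X"
| gen_dr: "x \<in> generated s dl dr X \<Longrightarrow> y \<in> generated s dl dr X \<Longrightarrow> dr x y \<in> generated s dl dr X"

definition fscale :: "'k::field \<Rightarrow> ('b \<Rightarrow> 'k) \<Rightarrow> ('b \<Rightarrow> 'k)" where
  "fscale c f = (\<lambda>b. c * f b)"

text \<open>The underlying vector space of D is realised as a subspace of the function space
  'v list => 'k (pointwise operations); this is no loss of generality since the
  subdialgebra of D generated by the image of J has dimension at most |'v list|.
  The embedding f is an injective linear map respecting the operations of D^(+):
  a -|+ b = 1/2 (a -| b + b |- a), a |-+ b = 1/2 (a |- b + b -| a).\<close>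
definition special_dialgebra ::
  "('k::field \<Rightarrow> 'v::ab_group_add \<Rightarrow> 'v) \<Rightarrow> ('v \<Rightarrow> 'v \<Rightarrow> 'v) \<Rightarrow> ('v \<Rightarrow> 'v \<Rightarrow> 'v) \<Rightarrow> bool" where
  "special_dialgebra s dl dr \<longleftrightarrow>
     (\<exists>(D :: ('v list \<Rightarrow> 'k) set) Dl Dr f.
        assoc_dialgebra_on fscale D Dl Dr \<and>
        inj f \<and> f ` UNIV \<subseteq> D \<and>
        (\<forall>x y. f (x + y) = f x + f y) \<and>
        (\<forall>c x. f (s c x) = fscale c (f x)) \<and>
        (\<forall>x y. f (dl x y) = fscale (1/2) (Dl (f x) (f y) + Dr (f y) (f x))) \<and>
        (\<forall>x y. f (dr x y) = fscale (1/2) (Dr (f x) (f y) + Dl (f y) (f x))))"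

end

theory Submission
  imports Defs "HOL-Computational_Algebra.Polynomial" "HOL-Library.Product_Plus"
begin

text \<open>
  Write \<open>x \<stileturn> y\<close> for \<open>dl x y\<close>, so that \<open>dr x y = y \<stileturn> x\<close>. Let \<open>a\<close> generate \<open>J\<close> and let \<open>Ra\<close>,
  \<open>Ra2\<close> be the right multiplications by \<open>a\<close> and \<open>a \<stileturn> a\<close>. Three instances of the dotted Jordan
  identities show that \<open>Ra\<close> and \<open>Ra2\<close> commute and that right multiplication by every element of
  \<open>J\<close> is a polynomial \<open>h\<close> in the operators \<open>cheb n\<close> of the Chebyshev-type recursion
  \<open>c\<^sub>n\<^sub>+\<^sub>2 = 2 Ra c\<^sub>n\<^sub>+\<^sub>1 - (2 Ra\<^sup>2 - Ra2) c\<^sub>n\<close>.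

  On pairs \<open>(y, y')\<close> let \<open>UL\<close> be the companion operator of this recursion and \<open>UR = 2 Ra - UL\<close>
  its conjugate; they commute. On the space of pairs killed by all polynomials that act as zero,
  \<open>x \<turnstile> y = h\<^sub>x(UL) y\<close> and \<open>x \<stileturn> y = h\<^sub>y(UR) x\<close> define an associative dialgebra \<open>D\<close>, and
  \<open>y \<mapsto> (y, Ra y)\<close> embeds \<open>J\<close> into \<open>D\<^sup>(\<^sup>+\<^sup>)\<close>: both \<open>UL\<^sup>n\<close> and \<open>UR\<^sup>n\<close> send \<open>(x, Ra x)\<close> to a pair with
  first coordinate \<open>cheb n x\<close>, and their second coordinates average to \<open>Ra (cheb n x)\<close>.
  Coordinates with respect to a basis finally place \<open>D\<close> inside the function space required by
  \<open>special_dialgebra\<close>.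
\<close>

locale poly_operators = vector_space scale
  for scale :: "'k::field \<Rightarrow> 'v::ab_group_add \<Rightarrow> 'v"
begin

abbreviation linear_endo :: "('v \<Rightarrow> 'v) \<Rightarrow> bool" where
  "linear_endo \<equiv> Vector_Spaces.linear scale scale"

lemma linear_endo_iff:
  "linear_endo T \<longleftrightarrow> (\<forall>x y. T (x + y) = T x + T y) \<and> (\<forall>c x. T (scale c x) = scale c (T x))"
  by (simp add: Vector_Spaces.linear_iff vector_space_axioms)

lemma
  assumes "linear_endo T"
  shows linear_endo_add: "T (x + y) = T x + T y"
    and linear_endo_scale: "T (scale c x) = scale c (T x)"
    and linear_endo_0: "T 0 = 0"
    and linear_endo_diff: "T (x - y) = T x - T y"
    and linear_endo_sum: "T (sum f A) = (\<Sum>i\<in>A. T (f i))"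
  using module_hom_linearI[OF assms]
  by (simp_all add: module_hom.add module_hom.scale module_hom.zero module_hom.diff module_hom.sum)

lemma linear_endo_comp: "linear_endo S \<Longrightarrow> linear_endo T \<Longrightarrow> linear_endo (\<lambda>x. S (T x))"
  by (simp add: linear_endo_iff)

lemma linear_endo_add_fun: "linear_endo S \<Longrightarrow> linear_endo T \<Longrightarrow> linear_endo (\<lambda>x. S x + T x)"
  by (simp add: linear_endo_iff scale_right_distrib algebra_simps)

lemma linear_endo_diff_fun: "linear_endo S \<Longrightarrow> linear_endo T \<Longrightarrow> linear_endo (\<lambda>x. S x - T x)"
  by (simp add: linear_endo_iff scale_right_diff_distrib algebra_simps)

lemma linear_endo_funpow: "linear_endo T \<Longrightarrow> linear_endo (T ^^ n)"
  by (induction n) (simp_all add: linear_endo_iff)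

definition poly_comb :: "'k poly \<Rightarrow> (nat \<Rightarrow> 'v \<Rightarrow> 'v) \<Rightarrow> 'v \<Rightarrow> 'v" where
  "poly_comb p F z = (\<Sum>n\<le>degree p. scale (coeff p n) (F n z))"

lemma poly_comb_eq_sum_lessThan:
  assumes "degree p < N"
  shows "poly_comb p F z = (\<Sum>n<N. scale (coeff p n) (F n z))"
  unfolding poly_comb_def
  by (rule sum.mono_neutral_left) (use assms in \<open>auto simp: coeff_eq_0\<close>)

lemma poly_comb_0 [simp]: "poly_comb 0 F z = 0"
  by (simp add: poly_comb_def)

lemma poly_comb_pCons: "poly_comb (pCons a p) F z = scale a (F 0 z) + poly_comb p (\<lambda>n. F (Suc n)) z"
proof -
  have "poly_comb (pCons a p) F z = (\<Sum>n<Suc (Suc (degree p)). scale (coeff (pCons a p) n) (F n z))"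
    using degree_pCons_le[of a p] by (intro poly_comb_eq_sum_lessThan) simp
  also have "\<dots> = scale a (F 0 z) + poly_comb p (\<lambda>n. F (Suc n)) z"
    by (subst sum.lessThan_Suc_shift) (simp add: poly_comb_def lessThan_Suc_atMost)
  finally show ?thesis .
qed

lemma poly_comb_add: "poly_comb (p + q) F z = poly_comb p F z + poly_comb q F z"
proof -
  define N where "N = Suc (max (degree p) (degree q))"
  have "degree (p + q) < N" "degree p < N" "degree q < N"
    using degree_add_le_max[of p q] by (auto simp: N_def)
  then show ?thesis
    by (simp add: poly_comb_eq_sum_lessThan[of _ N] scale_left_distrib sum.distrib)
qed

lemma poly_comb_smult: "poly_comb (smult c p) F z = scale c (poly_comb p F z)"
  using poly_comb_eq_sum_lessThan[of "smult c p" "Suc (degree p)"]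
  by (simp add: poly_comb_def lessThan_Suc_atMost scale_sum_right)

lemma poly_comb_diff: "poly_comb (p - q) F z = poly_comb p F z - poly_comb q F z"
  using poly_comb_add[of p "-q" F z] poly_comb_smult[of "-1" q F z] by (simp add: scale_minus_left)

lemma poly_comb_fun_add: "poly_comb p (\<lambda>n w. F n w + G n w) z = poly_comb p F z + poly_comb p G z"
  by (simp add: poly_comb_def scale_right_distrib sum.distrib)

lemma poly_comb_fun_diff: "poly_comb p (\<lambda>n w. F n w - G n w) z = poly_comb p F z - poly_comb p G z"
  by (simp add: poly_comb_def scale_right_diff_distrib sum_subtractf)

lemma poly_comb_cong: "(\<And>n. F n z = G n z) \<Longrightarrow> poly_comb p F z = poly_comb p G z"
  by (simp add: poly_comb_def)

lemma poly_comb_linear_image: "linear_endo T \<Longrightarrow> T (poly_comb p F z) = poly_comb p (\<lambda>n w. T (F n w)) z"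
  by (simp add: poly_comb_def linear_endo_sum linear_endo_scale)

lemma linear_endo_poly_comb:
  assumes "\<And>n. linear_endo (F n)"
  shows "linear_endo (poly_comb p F)"
  unfolding linear_endo_iff poly_comb_def
  by (simp add: linear_endo_add[OF assms] linear_endo_scale[OF assms] scale_right_distrib
      sum.distrib scale_sum_right mult.commute)

definition poly_op :: "'k poly \<Rightarrow> ('v \<Rightarrow> 'v) \<Rightarrow> 'v \<Rightarrow> 'v" where
  "poly_op p T = poly_comb p (\<lambda>n. T ^^ n)"

lemma linear_endo_poly_op: "linear_endo T \<Longrightarrow> linear_endo (poly_op p T)"
  unfolding poly_op_def by (intro linear_endo_poly_comb linear_endo_funpow)

lemma poly_op_pCons: "linear_endo T \<Longrightarrow> poly_op (pCons a p) T z = scale a z + T (poly_op p T z)"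
  by (simp add: poly_op_def poly_comb_pCons poly_comb_linear_image comp_def)

lemma poly_op_0 [simp]: "poly_op 0 T z = 0"
  by (simp add: poly_op_def)

lemma poly_op_add: "poly_op (p + q) T z = poly_op p T z + poly_op q T z"
  by (simp add: poly_op_def poly_comb_add)

lemma poly_op_diff: "poly_op (p - q) T z = poly_op p T z - poly_op q T z"
  by (simp add: poly_op_def poly_comb_diff)

lemma poly_op_smult: "poly_op (smult c p) T z = scale c (poly_op p T z)"
  by (simp add: poly_op_def poly_comb_smult)

lemma poly_op_mult:
  assumes "linear_endo T"
  shows "poly_op (p * q) T z = poly_op p T (poly_op q T z)"
proof (induction p rule: pCons_induct)
  case (pCons a p)
  have "poly_op (pCons a p * q) T z = poly_op (smult a q + pCons 0 (p * q)) T z"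
    by simp
  also have "\<dots> = poly_op (pCons a p) T (poly_op q T z)"
    by (simp add: poly_op_add poly_op_smult poly_op_pCons[OF assms] pCons)
  finally show ?case .
qed simp

lemma poly_op_commute:
  assumes "linear_endo S" "\<And>x. S (T x) = T (S x)"
  shows "S (poly_op p T z) = poly_op p T (S z)"
proof -
  have "S ((T ^^ n) w) = (T ^^ n) (S w)" for n w
    by (induction n) (simp_all add: assms(2))
  then show ?thesis
    by (simp add: poly_op_def poly_comb_linear_image[OF assms(1)]) (simp add: poly_comb_def)
qed

end

definition pair_scale :: "('k \<Rightarrow> 'v \<Rightarrow> 'v) \<Rightarrow> 'k \<Rightarrow> 'v \<times> 'v \<Rightarrow> 'v \<times> 'v" where
  "pair_scale s c m = (s c (fst m), s c (snd m))"

lemma fst_pair_scale [simp]: "fst (pair_scale s c m) = s c (fst m)"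
  and snd_pair_scale [simp]: "snd (pair_scale s c m) = s c (snd m)"
  by (simp_all add: pair_scale_def)

lemma vector_space_pair_scale: "vector_space s \<Longrightarrow> vector_space (pair_scale s)"
  unfolding vector_space_def pair_scale_def
  by (simp add: prod_eq_iff)

lemma linear_coordinates_exist:
  fixes s :: "'k::field \<Rightarrow> 'v::ab_group_add \<Rightarrow> 'v"
  assumes "vector_space s"
  obtains co :: "'v \<Rightarrow> 'v \<Rightarrow> 'k"
  where "inj co" "\<And>x y. co (x + y) = co x + co y" "\<And>c x. co (s c x) = fscale c (co x)"
proof
  interpret vector_space s by fact
  define B where "B = extend_basis {}"
  have B: "independent B" "span B = UNIV"
    unfolding B_def by (simp_all add: independent_extend_basis[OF independent_empty]
        span_extend_basis[OF independent_empty])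
  show "inj (representation B)"
  proof (rule injI)
    fix x y assume "representation B x = representation B y"
    then show "x = y"
      using sum_nonzero_representation_eq[OF B(1)] B(2) by (metis UNIV_I)
  qed
  show "representation B (x + y) = representation B x + representation B y" for x y
    using representation_add[OF B(1)] B(2) by (simp add: plus_fun_def)
  show "representation B (s c x) = fscale c (representation B x)" for c x
    using representation_scale[OF B(1)] B(2) by (simp add: fscale_def)
qed

lemma linear_pair_embedding_exists:
  fixes s :: "'k::field \<Rightarrow> 'v::ab_group_add \<Rightarrow> 'v"
  assumes "vector_space s"
  obtains f :: "'v \<times> 'v \<Rightarrow> 'v list \<Rightarrow> 'k"
  where "inj f" "\<And>m m'. f (m + m') = f m + f m'" "\<And>c m. f (pair_scale s c m) = fscale c (f m)"
proof -
  obtain co :: "'v \<Rightarrow> 'v \<Rightarrow> 'k"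
    where co: "inj co" "\<And>x y. co (x + y) = co x + co y" "\<And>c x. co (s c x) = fscale c (co x)"
    using linear_coordinates_exist[OF assms] by blast
  define f :: "'v \<times> 'v \<Rightarrow> 'v list \<Rightarrow> 'k" where
    "f m l = (case l of [b] \<Rightarrow> co (fst m) b | [b, _] \<Rightarrow> co (snd m) b | _ \<Rightarrow> 0)" for m l
  show thesis
  proof
    show "inj f"
    proof (rule injI)
      fix m m' assume eq: "f m = f m'"
      have "co (fst m) = co (fst m')" "co (snd m) = co (snd m')"
        using fun_cong[OF eq, of "[_]"] fun_cong[OF eq, of "[_, _]"] by (simp_all add: f_def fun_eq_iff)
      then show "m = m'"
        using co(1) by (simp add: prod_eq_iff inj_eq)
    qed
    show "f (m + m') = f m + f m'" for m m'
      by (simp add: fun_eq_iff f_def co(2) split: list.split)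
    show "f (pair_scale s c m) = fscale c (f m)" for c m
      by (simp add: fun_eq_iff f_def co(3) pair_scale_def fscale_def split: list.split)
  qed
qed

lemma assoc_dialgebra_on_image:
  assumes "assoc_dialgebra_on s A dl dr" "vector_space s'" "inj f"
    and add: "\<And>x y. f (x + y) = f x + f y" and scale: "\<And>c x. f (s c x) = s' c (f x)"
  shows "assoc_dialgebra_on s' (f ` A) (\<lambda>u w. f (dl (inv f u) (inv f w))) (\<lambda>u w. f (dr (inv f u) (inv f w)))"
proof -
  have inv: "inv f (f x) = x" for x by (rule inv_f_f[OF assms(3)])
  have zero: "f 0 = 0" using add[of 0 0] by simp
  have sub: "subspace_on s' (f ` A)" and bil: "bilinear_on s' (f ` A) (\<lambda>u w. f (m (inv f u) (inv f w)))"
    if "subspace_on s A" "bilinear_on s A m" for m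
    using that zero unfolding subspace_on_def bilinear_on_def
    by (auto simp: inv add[symmetric] scale[symmetric] image_iff)
  show ?thesis
    using assms(1,2) sub bil unfolding assoc_dialgebra_on_def zero_dialgebra_on_def
    by (auto simp: inv)
qed

lemma special_dialgebra_if_embeds_into_pairs:
  fixes s :: "'k::field \<Rightarrow> 'v::ab_group_add \<Rightarrow> 'v"
  assumes "vector_space s" "assoc_dialgebra_on (pair_scale s) A Dl Dr" "inj g" "range g \<subseteq> A"
    and add: "\<And>x y. g (x + y) = g x + g y" and scale: "\<And>c x. g (s c x) = pair_scale s c (g x)"
    and dl: "\<And>x y. g (dl x y) = pair_scale s (1/2) (Dl (g x) (g y) + Dr (g y) (g x))"
    and dr: "\<And>x y. g (dr x y) = pair_scale s (1/2) (Dr (g x) (g y) + Dl (g y) (g x))"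
  shows "special_dialgebra s dl dr"
proof -
  obtain f :: "'v \<times> 'v \<Rightarrow> 'v list \<Rightarrow> 'k"
    where f: "inj f" "\<And>m m'. f (m + m') = f m + f m'" "\<And>c m. f (pair_scale s c m) = fscale c (f m)"
    using linear_pair_embedding_exists[OF assms(1)] by blast
  have vs: "vector_space (fscale :: 'k \<Rightarrow> ('v list \<Rightarrow> 'k) \<Rightarrow> _)"
    by unfold_locales (simp_all add: fscale_def fun_eq_iff algebra_simps)
  have inv: "inv f (f m) = m" for m by (rule inv_f_f[OF f(1)])
  define Dl' where "Dl' u w = f (Dl (inv f u) (inv f w))" for u w
  define Dr' where "Dr' u w = f (Dr (inv f u) (inv f w))" for u w
  have "assoc_dialgebra_on fscale (f ` A) Dl' Dr'"
    using assoc_dialgebra_on_image[OF assms(2) vs f] by (simp only: Dl'_def[abs_def] Dr'_def[abs_def])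
  moreover have "inj (f \<circ> g)" "range (f \<circ> g) \<subseteq> f ` A"
    using inj_compose[OF f(1) assms(3)] assms(4) by auto
  moreover have "\<forall>x y. (f \<circ> g) (x + y) = (f \<circ> g) x + (f \<circ> g) y"
    "\<forall>c x. (f \<circ> g) (s c x) = fscale c ((f \<circ> g) x)"
    "\<forall>x y. (f \<circ> g) (dl x y) = fscale (1/2) (Dl' ((f \<circ> g) x) ((f \<circ> g) y) + Dr' ((f \<circ> g) y) ((f \<circ> g) x))"
    "\<forall>x y. (f \<circ> g) (dr x y) = fscale (1/2) (Dr' ((f \<circ> g) x) ((f \<circ> g) y) + Dl' ((f \<circ> g) y) ((f \<circ> g) x))"
    by (simp_all add: add scale dl dr f(2,3) inv Dl'_def Dr'_def)
  ultimately show ?thesis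
    unfolding special_dialgebra_def by blast
qed

text \<open>Writing \<open>x \<turnstile> y = y \<stileturn> x\<close>, the assumptions \<open>J_dot1\<close>, \<open>J_dot4\<close>, \<open>J_dot2\<close> are the instances
  \<open>J(z, w, a, a)\<close>, \<open>J(a, a, w, z)\<close>, \<open>J(a, z, a, a)\<close> of the Jordan identity, dotted at \<open>z\<close>.\<close>
locale jordan_identities_at = poly_operators s
  for s :: "'k::field_char_0 \<Rightarrow> 'v::ab_group_add \<Rightarrow> 'v" +
  fixes dl :: "'v \<Rightarrow> 'v \<Rightarrow> 'v" (infixl \<open>\<stileturn>\<close> 70)
    and a :: 'v
  assumes dl_add_left: "(x + y) \<stileturn> z = x \<stileturn> z + y \<stileturn> z"
    and dl_add_right: "z \<stileturn> (x + y) = z \<stileturn> x + z \<stileturn> y"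
    and dl_scale_left: "s c x \<stileturn> y = s c (x \<stileturn> y)"
    and dl_scale_right: "x \<stileturn> s c y = s c (x \<stileturn> y)"
    and dl_dl_commute: "z \<stileturn> (x \<stileturn> y) = z \<stileturn> (y \<stileturn> x)"
    and J_dot1: "z \<stileturn> (a \<stileturn> a \<stileturn> w) + z \<stileturn> a \<stileturn> w \<stileturn> a + z \<stileturn> a \<stileturn> w \<stileturn> a
      - z \<stileturn> w \<stileturn> (a \<stileturn> a) - z \<stileturn> a \<stileturn> (a \<stileturn> w) - z \<stileturn> a \<stileturn> (w \<stileturn> a) = 0"
    and J_dot4: "z \<stileturn> w \<stileturn> a \<stileturn> a + z \<stileturn> (w \<stileturn> a \<stileturn> a) + z \<stileturn> a \<stileturn> a \<stileturn> w
      - z \<stileturn> w \<stileturn> (a \<stileturn> a) - z \<stileturn> a \<stileturn> (w \<stileturn> a) - z \<stileturn> a \<stileturn> (a \<stileturn> w) = 0"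
    and J_dot2: "z \<stileturn> (a \<stileturn> a) \<stileturn> a + z \<stileturn> (a \<stileturn> a) \<stileturn> a + z \<stileturn> (a \<stileturn> a) \<stileturn> a
      - z \<stileturn> a \<stileturn> (a \<stileturn> a) - z \<stileturn> a \<stileturn> (a \<stileturn> a) - z \<stileturn> a \<stileturn> (a \<stileturn> a) = 0"

lemma jordan_identities_at_if_jordan_dialgebra:
  fixes s :: "'k::field_char_0 \<Rightarrow> 'v::ab_group_add \<Rightarrow> 'v"
  assumes "jordan_dialgebra_on s UNIV dl (\<lambda>x y. dl y x)"
  shows "jordan_identities_at s dl a"
proof -
  have vs: "vector_space s" and bil: "bilinear_on s UNIV dl"
    and zero_id: "\<And>x y z. dl z (dl x y) = dl z (dl y x)"
    and J: "\<And>x i. i \<in> {1..4} \<Longrightarrow> J_dot dl (\<lambda>x y. dl y x) i x = 0"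
    using assms unfolding jordan_dialgebra_on_def zero_dialgebra_on_def by auto
  show ?thesis
  proof (intro jordan_identities_at.intro poly_operators.intro jordan_identities_at_axioms.intro)
    fix z w
    show "dl z (dl (dl a a) w) + dl (dl (dl z a) w) a + dl (dl (dl z a) w) a - dl (dl z w) (dl a a)
      - dl (dl z a) (dl a w) - dl (dl z a) (dl w a) = 0"
      using J[of 1 "\<lambda>j. if j = 1 then z else if j = 2 then w else a"] by (simp add: J_dot_def)
    show "dl (dl (dl z w) a) a + dl z (dl (dl w a) a) + dl (dl (dl z a) a) w - dl (dl z w) (dl a a)
      - dl (dl z a) (dl w a) - dl (dl z a) (dl a w) = 0"
      using J[of 4 "\<lambda>j. if j = 4 then z else if j = 3 then w else a"] by (simp add: J_dot_def)
    show "dl (dl z (dl a a)) a + dl (dl z (dl a a)) a + dl (dl z (dl a a)) a - dl (dl z a) (dl a a)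
      - dl (dl z a) (dl a a) - dl (dl z a) (dl a a) = 0"
      using J[of 2 "\<lambda>j. if j = 2 then z else a"] by (simp add: J_dot_def)
  qed (use vs bil zero_id in \<open>simp_all add: bilinear_on_def\<close>)
qed

context jordan_identities_at
begin

definition Ra :: "'v \<Rightarrow> 'v" where "Ra z = z \<stileturn> a"
definition Ra2 :: "'v \<Rightarrow> 'v" where "Ra2 z = z \<stileturn> (a \<stileturn> a)"
definition nrm :: "'v \<Rightarrow> 'v" where "nrm z = Ra (Ra z) + Ra (Ra z) - Ra2 z"

text \<open>\<open>cheb (Suc k)\<close> turns out to be right multiplication by \<open>Ra\<^sup>k a\<close> (\<open>dl_Ra_pow_generator\<close>).\<close>
fun cheb :: "nat \<Rightarrow> 'v \<Rightarrow> 'v" where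
  "cheb 0 z = z"
| "cheb (Suc 0) z = Ra z"
| "cheb (Suc (Suc n)) z = Ra (cheb (Suc n) z) + Ra (cheb (Suc n) z) - nrm (cheb n z)"

declare cheb.simps(3) [simp del]

lemma linear_endo_dl_left: "linear_endo (\<lambda>z. z \<stileturn> w)"
  by (simp add: linear_endo_iff dl_add_left dl_scale_left)

lemma linear_endo_dl_right: "linear_endo (\<lambda>z. w \<stileturn> z)"
  by (simp add: linear_endo_iff dl_add_right dl_scale_right)

lemma linear_endo_Ra: "linear_endo Ra"
  unfolding Ra_def[abs_def] by (rule linear_endo_dl_left)

lemma linear_endo_Ra2: "linear_endo Ra2"
  unfolding Ra2_def[abs_def] by (rule linear_endo_dl_left)

lemma linear_endo_nrm: "linear_endo nrm"
  unfolding nrm_def[abs_def]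
  by (rule linear_endo_diff_fun[OF linear_endo_add_fun linear_endo_Ra2];
      rule linear_endo_comp[OF linear_endo_Ra linear_endo_Ra])

lemma dl_0_right [simp]: "z \<stileturn> 0 = 0"
  using linear_endo_0[OF linear_endo_dl_right] .

text \<open>\<open>J_dot2\<close> says \<open>3 (Ra Ra2 - Ra2 Ra) = 0\<close>.\<close>
lemma Ra_Ra2_commute: "Ra (Ra2 z) = Ra2 (Ra z)"
proof -
  have triple: "s 3 x = x + x + x" for x
  proof -
    have "s (1 + 1 + 1) x = x + x + x" by (simp only: scale_left_distrib scale_one)
    then show ?thesis by simp
  qed
  have "s 3 (Ra (Ra2 z)) = s 3 (Ra2 (Ra z))"
    using J_dot2[of z] by (simp add: triple Ra_def Ra2_def algebra_simps)
  then show ?thesis by simp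
qed

lemma nrm_Ra_commute: "nrm (Ra z) = Ra (nrm z)"
  by (simp add: nrm_def Ra_Ra2_commute linear_endo_add[OF linear_endo_Ra] linear_endo_diff[OF linear_endo_Ra])

lemma cheb_Ra_commute: "cheb n (Ra z) = Ra (cheb n z)"
  by (induction n z rule: cheb.induct)
    (simp_all add: cheb.simps(3) nrm_Ra_commute linear_endo_add[OF linear_endo_Ra]
      linear_endo_diff[OF linear_endo_Ra])

lemma cheb_Suc_Suc_Ra2:
  "cheb (Suc (Suc n)) z
    = Ra2 (cheb n z) + (cheb (Suc n) (Ra z) + cheb (Suc n) (Ra z)) - (Ra (cheb n (Ra z)) + Ra (cheb n (Ra z)))"
  by (simp add: cheb.simps(3) cheb_Ra_commute nrm_def algebra_simps)

lemma dl_Ra2: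
  "z \<stileturn> Ra2 w = Ra2 (z \<stileturn> w) + (Ra z \<stileturn> Ra w + Ra z \<stileturn> Ra w) - (Ra (Ra z \<stileturn> w) + Ra (Ra z \<stileturn> w))"
  using J_dot1[of z w]
  unfolding Ra_def Ra2_def dl_dl_commute[of z "a \<stileturn> a" w] dl_dl_commute[of "z \<stileturn> a" a w]
  by (simp add: algebra_simps)

lemma dl_Ra_Ra:
  "z \<stileturn> Ra (Ra w) = Ra2 (z \<stileturn> w) + (Ra z \<stileturn> Ra w + Ra z \<stileturn> Ra w) - Ra (Ra (z \<stileturn> w)) - Ra (Ra z) \<stileturn> w"
  using J_dot4[of z w]
  unfolding Ra_def Ra2_def dl_dl_commute[of "z \<stileturn> a" a w]
  by (simp add: algebra_simps)

definition acts_by :: "'v \<Rightarrow> 'k poly \<Rightarrow> bool" where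
  "acts_by y h \<longleftrightarrow> (\<forall>k z. z \<stileturn> (Ra ^^ k) y = poly_comb h (\<lambda>n. cheb (n + k)) z)"

lemma acts_byD: "acts_by y h \<Longrightarrow> z \<stileturn> (Ra ^^ k) y = poly_comb h (\<lambda>n. cheb (n + k)) z"
  by (simp add: acts_by_def)

lemma acts_byD_Ra: "acts_by y h \<Longrightarrow> z \<stileturn> Ra ((Ra ^^ k) y) = poly_comb h (\<lambda>n. cheb (Suc (n + k))) z"
  using acts_byD[of y h z "Suc k"] by simp

lemma dl_eq_poly_comb_cheb: "acts_by y h \<Longrightarrow> z \<stileturn> y = poly_comb h cheb z"
  using acts_byD[of y h z 0] by simp

lemma linear_endo_Ra_pow: "linear_endo (Ra ^^ k)"
  by (rule linear_endo_funpow[OF linear_endo_Ra])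

lemma acts_by_0: "acts_by 0 0"
  by (simp add: acts_by_def linear_endo_0[OF linear_endo_Ra_pow])

lemma acts_by_add: "acts_by y h \<Longrightarrow> acts_by y' h' \<Longrightarrow> acts_by (y + y') (h + h')"
  by (simp add: acts_by_def linear_endo_add[OF linear_endo_Ra_pow] dl_add_right poly_comb_add)

lemma acts_by_diff: "acts_by y h \<Longrightarrow> acts_by y' h' \<Longrightarrow> acts_by (y - y') (h - h')"
  by (simp add: acts_by_def linear_endo_diff[OF linear_endo_Ra_pow] linear_endo_diff[OF linear_endo_dl_right]
      poly_comb_diff)

lemma acts_by_scale: "acts_by y h \<Longrightarrow> acts_by (s c y) (smult c h)"
  by (simp add: acts_by_def linear_endo_scale[OF linear_endo_Ra_pow] dl_scale_right poly_comb_smult)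

lemma acts_by_Ra:
  assumes "acts_by y h"
  shows "acts_by (Ra y) ([:0, 1:] * h)"
  unfolding acts_by_def
proof (intro allI)
  fix k z
  have "(Ra ^^ k) (Ra y) = Ra ((Ra ^^ k) y)" by (rule funpow_swap1[symmetric])
  then show "z \<stileturn> (Ra ^^ k) (Ra y) = poly_comb ([:0, 1:] * h) (\<lambda>n. cheb (n + k)) z"
    using acts_byD_Ra[OF assms, of z k] by (simp add: poly_comb_pCons)
qed

lemma Ra_pow_Ra2_commute: "(Ra ^^ k) (Ra2 y) = Ra2 ((Ra ^^ k) y)"
  by (induction k) (simp_all add: Ra_Ra2_commute)

lemma acts_by_Ra2:
  assumes "acts_by y h"
  shows "acts_by (Ra2 y) ([:0, 1:] ^ 2 * h)"
  unfolding acts_by_def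
proof (intro allI)
  fix k z
  define w where "w = (Ra ^^ k) y"
  have "z \<stileturn> (Ra ^^ k) (Ra2 y)
      = Ra2 (z \<stileturn> w) + (Ra z \<stileturn> Ra w + Ra z \<stileturn> Ra w) - (Ra (Ra z \<stileturn> w) + Ra (Ra z \<stileturn> w))"
    by (simp add: Ra_pow_Ra2_commute w_def dl_Ra2)
  also have "\<dots> = poly_comb h (\<lambda>n v. Ra2 (cheb (n + k) v)) z
      + (poly_comb h (\<lambda>n v. cheb (n + Suc k) (Ra v)) z + poly_comb h (\<lambda>n v. cheb (n + Suc k) (Ra v)) z)
      - (poly_comb h (\<lambda>n v. Ra (cheb (n + k) (Ra v))) z + poly_comb h (\<lambda>n v. Ra (cheb (n + k) (Ra v))) z)"
    unfolding w_def acts_byD[OF assms] acts_byD_Ra[OF assms]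
    by (simp add: poly_comb_linear_image[OF linear_endo_Ra2] poly_comb_linear_image[OF linear_endo_Ra])
      (simp add: poly_comb_def)
  also have "\<dots> = poly_comb h (\<lambda>n v. Ra2 (cheb (n + k) v)
      + (cheb (n + Suc k) (Ra v) + cheb (n + Suc k) (Ra v)) - (Ra (cheb (n + k) (Ra v)) + Ra (cheb (n + k) (Ra v)))) z"
    by (simp only: poly_comb_fun_add poly_comb_fun_diff)
  also have "\<dots> = poly_comb h (\<lambda>n. cheb (n + Suc (Suc k))) z"
    by (rule poly_comb_cong) (simp add: cheb_Suc_Suc_Ra2)
  also have "\<dots> = poly_comb ([:0, 1:] ^ 2 * h) (\<lambda>n. cheb (n + k)) z"
    by (simp add: poly_comb_pCons power2_eq_square)
  finally show "z \<stileturn> (Ra ^^ k) (Ra2 y) = poly_comb ([:0, 1:] ^ 2 * h) (\<lambda>n. cheb (n + k)) z" .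
qed

lemma acts_by_nrm:
  assumes "acts_by y h"
  shows "acts_by (nrm y) ([:0, 1:] ^ 2 * h)"
proof -
  have "acts_by (nrm y) ([:0, 1:] * ([:0, 1:] * h) + [:0, 1:] * ([:0, 1:] * h) - [:0, 1:] ^ 2 * h)"
    unfolding nrm_def using assms by (intro acts_by_diff acts_by_add acts_by_Ra acts_by_Ra2)
  then show ?thesis by (simp add: algebra_simps power2_eq_square)
qed

lemma acts_by_cheb: "acts_by y h \<Longrightarrow> acts_by (cheb j y) ([:0, 1:] ^ j * h)"
proof (induction j y rule: cheb.induct)
  case (3 n y)
  have "acts_by (cheb (Suc (Suc n)) y)
      ([:0, 1:] * ([:0, 1:] ^ Suc n * h) + [:0, 1:] * ([:0, 1:] ^ Suc n * h) - [:0, 1:] ^ 2 * ([:0, 1:] ^ n * h))"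
    unfolding cheb.simps(3) using 3 by (intro acts_by_diff acts_by_add acts_by_Ra acts_by_nrm)
  then show ?case by (simp add: algebra_simps power2_eq_square)
qed (simp_all add: acts_by_Ra[of _ h, simplified])

lemma acts_by_poly_comb_cheb:
  "acts_by y h \<Longrightarrow> acts_by (poly_comb p (\<lambda>n. cheb (n + j)) y) (p * [:0, 1:] ^ j * h)"
proof (induction p arbitrary: j rule: pCons_induct)
  case (pCons c p)
  then have "acts_by (s c (cheb j y) + poly_comb p (\<lambda>n. cheb (n + Suc j)) y)
      (smult c ([:0, 1:] ^ j * h) + p * [:0, 1:] ^ Suc j * h)"
    by (intro acts_by_add acts_by_scale acts_by_cheb)
  then show ?case by (simp add: poly_comb_pCons algebra_simps)
qed (simp add: acts_by_0)

lemma acts_by_dl: "acts_by y h \<Longrightarrow> acts_by z h' \<Longrightarrow> acts_by (y \<stileturn> z) (h' * h)"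
  using acts_by_poly_comb_cheb[of y h h' 0] dl_eq_poly_comb_cheb[of z h' y] by simp

lemma dl_Ra_pow_generator: "z \<stileturn> (Ra ^^ k) a = cheb (Suc k) z"
proof -
  have "(\<forall>z. z \<stileturn> (Ra ^^ k) a = cheb (Suc k) z) \<and> (\<forall>z. z \<stileturn> Ra ((Ra ^^ k) a) = cheb (Suc (Suc k)) z)"
  proof (induction k)
    case 0
    show ?case by (simp add: Ra_def Ra2_def nrm_def cheb.simps(3))
  next
    case (Suc k)
    define w where "w = (Ra ^^ k) a"
    have IH: "z \<stileturn> w = cheb (Suc k) z" "z \<stileturn> Ra w = cheb (Suc (Suc k)) z" for z
      using Suc unfolding w_def by auto
    have "z \<stileturn> Ra (Ra w) = cheb (Suc (Suc (Suc k))) z" for z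
      unfolding dl_Ra_Ra IH cheb_Suc_Suc_Ra2[of "Suc k" z] cheb_Ra_commute by (simp add: algebra_simps)
    then show ?case using IH(2) by (simp add: w_def)
  qed
  then show ?thesis by blast
qed

lemma acts_by_generator: "acts_by a [:0, 1:]"
  by (simp add: acts_by_def dl_Ra_pow_generator poly_comb_pCons)

lemma acts_by_generated: "y \<in> generated s (\<stileturn>) (\<lambda>x y. y \<stileturn> x) {a} \<Longrightarrow> \<exists>h. acts_by y h"
  by (induction rule: generated.induct)
    (blast intro: acts_by_generator acts_by_0 acts_by_add acts_by_scale acts_by_dl)+

end

sublocale jordan_identities_at \<subseteq> pairs: poly_operators "pair_scale s"
  by (simp add: poly_operators_def vector_space_pair_scale vector_space_axioms)

context jordan_identities_at
begin

text \<open>\<open>UL\<close> is the companion operator of the recursion defining \<open>cheb\<close> and \<open>UR\<close> is its conjugate: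
  they commute and realise the two roots of \<open>t\<^sup>2 - 2 Ra t + nrm\<close>.\<close>
definition UL :: "'v \<times> 'v \<Rightarrow> 'v \<times> 'v" where
  "UL m = (snd m, Ra (snd m) + Ra (snd m) - nrm (fst m))"

definition UR :: "'v \<times> 'v \<Rightarrow> 'v \<times> 'v" where
  "UR m = (Ra (fst m) + Ra (fst m) - snd m, nrm (fst m))"

definition lift :: "'v \<Rightarrow> 'v \<times> 'v" where
  "lift y = (y, Ra y)"

lemma linear_endo_UL: "pairs.linear_endo UL"
  by (simp add: pairs.linear_endo_iff UL_def pair_scale_def linear_endo_add[OF linear_endo_Ra]
      linear_endo_diff[OF linear_endo_Ra] linear_endo_add[OF linear_endo_nrm] linear_endo_diff[OF linear_endo_nrm]
      linear_endo_scale[OF linear_endo_Ra] linear_endo_scale[OF linear_endo_nrm]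
      scale_right_diff_distrib scale_right_distrib algebra_simps)

lemma linear_endo_UR: "pairs.linear_endo UR"
  by (simp add: pairs.linear_endo_iff UR_def pair_scale_def linear_endo_add[OF linear_endo_Ra]
      linear_endo_diff[OF linear_endo_Ra] linear_endo_add[OF linear_endo_nrm] linear_endo_diff[OF linear_endo_nrm]
      linear_endo_scale[OF linear_endo_Ra] linear_endo_scale[OF linear_endo_nrm]
      scale_right_diff_distrib scale_right_distrib algebra_simps)

lemma UL_UR_commute: "UL (UR m) = UR (UL m)"
  by (simp add: UL_def UR_def nrm_Ra_commute linear_endo_add[OF linear_endo_Ra] linear_endo_diff[OF linear_endo_Ra]
      linear_endo_diff[OF linear_endo_nrm] linear_endo_add[OF linear_endo_nrm])

text \<open>Pairs that behave like \<open>(y, Ra y)\<close>.\<close>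
definition admissible :: "('v \<times> 'v) set" where
  "admissible = {m. \<exists>h. acts_by (fst m) h \<and> acts_by (snd m) ([:0, 1:] * h)}"

definition null_polys :: "'k poly set" where
  "null_polys = {p. acts_by 0 p}"

text \<open>\<open>acts_by\<close> determines a polynomial only modulo \<open>null_polys\<close>; on \<open>Dspace\<close> this ambiguity is
  invisible, so the products below do not depend on the choice made by \<open>poly_of\<close>.\<close>
definition Dspace :: "('v \<times> 'v) set" where
  "Dspace = {m \<in> admissible. \<forall>p \<in> null_polys. pairs.poly_op p UL m = 0 \<and> pairs.poly_op p UR m = 0}"

definition poly_of :: "'v \<times> 'v \<Rightarrow> 'k poly" where
  "poly_of m = (SOME h. acts_by (fst m) h)"

definition dlD :: "'v \<times> 'v \<Rightarrow> 'v \<times> 'v \<Rightarrow> 'v \<times> 'v" where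
  "dlD x y = pairs.poly_op (poly_of y) UR x"

definition drD :: "'v \<times> 'v \<Rightarrow> 'v \<times> 'v \<Rightarrow> 'v \<times> 'v" where
  "drD x y = pairs.poly_op (poly_of x) UL y"

lemma acts_by_snd:
  assumes "m \<in> admissible" "acts_by (fst m) h"
  shows "acts_by (snd m) ([:0, 1:] * h)"
proof -
  obtain h0 where h0: "acts_by (fst m) h0" "acts_by (snd m) ([:0, 1:] * h0)"
    using assms(1) by (auto simp: admissible_def)
  have "acts_by 0 (h - h0)"
    using acts_by_diff[OF assms(2) h0(1)] by simp
  then have "acts_by (Ra 0) ([:0, 1:] * (h - h0))"
    by (rule acts_by_Ra)
  then have "acts_by (snd m + 0) ([:0, 1:] * h0 + [:0, 1:] * (h - h0))"
    by (intro acts_by_add h0(2)) (simp add: linear_endo_0[OF linear_endo_Ra])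
  then show ?thesis by (simp add: algebra_simps)
qed

lemma acts_by_poly_of: "m \<in> admissible \<Longrightarrow> acts_by (fst m) (poly_of m)"
  unfolding poly_of_def by (rule someI_ex) (auto simp: admissible_def)

lemma admissible_0: "0 \<in> admissible"
  using acts_by_0 by (auto simp: admissible_def intro!: exI[of _ 0])

lemma admissible_add:
  assumes "m \<in> admissible" "m' \<in> admissible"
  shows "m + m' \<in> admissible"
proof -
  obtain h h' where "acts_by (fst m) h" "acts_by (snd m) ([:0, 1:] * h)"
    "acts_by (fst m') h'" "acts_by (snd m') ([:0, 1:] * h')"
    using assms by (auto simp: admissible_def)
  then have "acts_by (fst (m + m')) (h + h')" "acts_by (snd (m + m')) ([:0, 1:] * (h + h'))"
    using acts_by_add by (fastforce simp: distrib_left)+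
  then show ?thesis by (auto simp: admissible_def)
qed

lemma admissible_scale:
  assumes "m \<in> admissible"
  shows "pair_scale s c m \<in> admissible"
proof -
  obtain h where h: "acts_by (fst m) h" "acts_by (snd m) ([:0, 1:] * h)"
    using assms by (auto simp: admissible_def)
  have "acts_by (fst (pair_scale s c m)) (smult c h)"
    "acts_by (snd (pair_scale s c m)) ([:0, 1:] * smult c h)"
    using acts_by_scale[OF h(1), of c] acts_by_scale[OF h(2), of c] by simp_all
  then show ?thesis by (auto simp: admissible_def)
qed

lemma UL_admissible:
  assumes "m \<in> admissible" "acts_by (fst m) h"
  shows "UL m \<in> admissible \<and> acts_by (fst (UL m)) ([:0, 1:] * h)"
proof -
  have snd: "acts_by (snd m) ([:0, 1:] * h)" by (rule acts_by_snd[OF assms])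
  have "acts_by (Ra (snd m) + Ra (snd m) - nrm (fst m))
      ([:0, 1:] * ([:0, 1:] * h) + [:0, 1:] * ([:0, 1:] * h) - [:0, 1:] ^ 2 * h)"
    by (intro acts_by_diff acts_by_add acts_by_Ra acts_by_nrm snd assms(2))
  then have "acts_by (snd (UL m)) ([:0, 1:] * ([:0, 1:] * h))"
    by (simp add: UL_def algebra_simps power2_eq_square)
  then show ?thesis using snd by (auto simp: admissible_def UL_def)
qed

lemma UR_admissible:
  assumes "m \<in> admissible" "acts_by (fst m) h"
  shows "UR m \<in> admissible \<and> acts_by (fst (UR m)) ([:0, 1:] * h)"
proof -
  have "acts_by (Ra (fst m) + Ra (fst m) - snd m) ([:0, 1:] * h + [:0, 1:] * h - [:0, 1:] * h)"
    by (intro acts_by_diff acts_by_add acts_by_Ra acts_by_snd assms)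
  then have fst: "acts_by (fst (UR m)) ([:0, 1:] * h)" by (simp add: UR_def)
  have "acts_by (snd (UR m)) ([:0, 1:] ^ 2 * h)" by (simp add: UR_def acts_by_nrm assms(2))
  then have "acts_by (snd (UR m)) ([:0, 1:] * ([:0, 1:] * h))" by (simp add: power2_eq_square algebra_simps)
  then show ?thesis using fst by (auto simp: admissible_def)
qed

lemma poly_op_admissible:
  assumes T: "pairs.linear_endo T"
    and T_adm: "\<And>m h. m \<in> admissible \<Longrightarrow> acts_by (fst m) h
      \<Longrightarrow> T m \<in> admissible \<and> acts_by (fst (T m)) ([:0, 1:] * h)"
    and m: "m \<in> admissible" "acts_by (fst m) h"
  shows "pairs.poly_op p T m \<in> admissible \<and> acts_by (fst (pairs.poly_op p T m)) (p * h)"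
proof (induction p rule: pCons_induct)
  case 0
  then show ?case using admissible_0 acts_by_0 by (simp add: zero_prod_def)
next
  case (pCons c p)
  then have IH: "pairs.poly_op p T m \<in> admissible" "acts_by (fst (pairs.poly_op p T m)) (p * h)"
    by auto
  have "acts_by (s c (fst m) + fst (T (pairs.poly_op p T m))) (smult c h + [:0, 1:] * (p * h))"
    by (intro acts_by_add acts_by_scale m(2) conjunct2[OF T_adm[OF IH]])
  moreover have "smult c h + [:0, 1:] * (p * h) = pCons c p * h"
    by (simp add: algebra_simps)
  ultimately show ?case
    using admissible_add[OF admissible_scale[OF m(1)] conjunct1[OF T_adm[OF IH]]]
    by (simp add: pairs.poly_op_pCons[OF T])
qed

lemma Dspace_admissible: "m \<in> Dspace \<Longrightarrow> m \<in> admissible"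
  by (simp add: Dspace_def)

lemma Dspace_0: "0 \<in> Dspace"
  using admissible_0 pairs.linear_endo_0[OF pairs.linear_endo_poly_op[OF linear_endo_UL]]
    pairs.linear_endo_0[OF pairs.linear_endo_poly_op[OF linear_endo_UR]]
  by (simp add: Dspace_def)

lemma Dspace_add: "m \<in> Dspace \<Longrightarrow> m' \<in> Dspace \<Longrightarrow> m + m' \<in> Dspace"
  using admissible_add pairs.linear_endo_add[OF pairs.linear_endo_poly_op[OF linear_endo_UL]]
    pairs.linear_endo_add[OF pairs.linear_endo_poly_op[OF linear_endo_UR]]
  by (simp add: Dspace_def)

lemma Dspace_scale: "m \<in> Dspace \<Longrightarrow> pair_scale s c m \<in> Dspace"
  using admissible_scale pairs.linear_endo_scale[OF pairs.linear_endo_poly_op[OF linear_endo_UL]]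
    pairs.linear_endo_scale[OF pairs.linear_endo_poly_op[OF linear_endo_UR]]
  by (simp add: Dspace_def pair_scale_def zero_prod_def)

lemma Dspace_closed:
  assumes T: "pairs.linear_endo T" "\<And>m. UL (T m) = T (UL m)" "\<And>m. UR (T m) = T (UR m)"
    and T_adm: "\<And>m. m \<in> admissible \<Longrightarrow> T m \<in> admissible"
    and m: "m \<in> Dspace"
  shows "T m \<in> Dspace"
proof -
  have "pairs.poly_op p UL (T m) = T (pairs.poly_op p UL m)" "pairs.poly_op p UR (T m) = T (pairs.poly_op p UR m)"
    for p by (simp_all add: pairs.poly_op_commute[OF T(1)] T(2,3))
  then show ?thesis
    using m T_adm pairs.linear_endo_0[OF T(1)] by (simp add: Dspace_def)
qed

lemma Dspace_UL: "m \<in> Dspace \<Longrightarrow> UL m \<in> Dspace"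
  by (rule Dspace_closed[OF linear_endo_UL refl UL_UR_commute[symmetric]])
    (use UL_admissible acts_by_poly_of in blast)

lemma Dspace_UR: "m \<in> Dspace \<Longrightarrow> UR m \<in> Dspace"
  by (rule Dspace_closed[OF linear_endo_UR UL_UR_commute refl])
    (use UR_admissible acts_by_poly_of in blast)

lemma Dspace_poly_op:
  assumes "pairs.linear_endo T" "\<And>m. m \<in> Dspace \<Longrightarrow> T m \<in> Dspace" "m \<in> Dspace"
  shows "pairs.poly_op p T m \<in> Dspace"
  by (induction p rule: pCons_induct)
    (simp_all add: Dspace_0 Dspace_add Dspace_scale assms pairs.poly_op_pCons[OF assms(1)])

lemma poly_op_eq_if_acts_by:
  assumes "m \<in> Dspace" "acts_by y h" "acts_by y h'"
  shows "pairs.poly_op h UL m = pairs.poly_op h' UL m" "pairs.poly_op h UR m = pairs.poly_op h' UR m"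
proof -
  have "h - h' \<in> null_polys"
    using acts_by_diff[OF assms(2,3)] by (simp add: null_polys_def)
  then have "pairs.poly_op (h - h') UL m = 0" "pairs.poly_op (h - h') UR m = 0"
    using assms(1) by (auto simp: Dspace_def)
  then show "pairs.poly_op h UL m = pairs.poly_op h' UL m" "pairs.poly_op h UR m = pairs.poly_op h' UR m"
    by (simp_all add: pairs.poly_op_diff)
qed

lemma drD_eq: "x \<in> Dspace \<Longrightarrow> z \<in> Dspace \<Longrightarrow> acts_by (fst x) h \<Longrightarrow> drD x z = pairs.poly_op h UL z"
  unfolding drD_def by (rule poly_op_eq_if_acts_by(1)[OF _ acts_by_poly_of[OF Dspace_admissible]])

lemma dlD_eq: "x \<in> Dspace \<Longrightarrow> z \<in> Dspace \<Longrightarrow> acts_by (fst x) h \<Longrightarrow> dlD z x = pairs.poly_op h UR z"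
  unfolding dlD_def by (rule poly_op_eq_if_acts_by(2)[OF _ acts_by_poly_of[OF Dspace_admissible]])

lemma drD_Dspace: "y \<in> Dspace \<Longrightarrow> drD x y \<in> Dspace"
  unfolding drD_def by (rule Dspace_poly_op[OF linear_endo_UL Dspace_UL])

lemma dlD_Dspace: "x \<in> Dspace \<Longrightarrow> dlD x y \<in> Dspace"
  unfolding dlD_def by (rule Dspace_poly_op[OF linear_endo_UR Dspace_UR])

lemma acts_by_fst_drD: "x \<in> Dspace \<Longrightarrow> y \<in> Dspace \<Longrightarrow> acts_by (fst (drD x y)) (poly_of x * poly_of y)"
  unfolding drD_def
  using poly_op_admissible[OF linear_endo_UL UL_admissible Dspace_admissible acts_by_poly_of[OF Dspace_admissible]]
  by blast

lemma acts_by_fst_dlD: "x \<in> Dspace \<Longrightarrow> y \<in> Dspace \<Longrightarrow> acts_by (fst (dlD x y)) (poly_of y * poly_of x)"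
  unfolding dlD_def
  using poly_op_admissible[OF linear_endo_UR UR_admissible Dspace_admissible acts_by_poly_of[OF Dspace_admissible]]
  by blast

lemma acts_by_fst_add: "x \<in> Dspace \<Longrightarrow> x' \<in> Dspace \<Longrightarrow> acts_by (fst (x + x')) (poly_of x + poly_of x')"
  by (simp add: acts_by_add acts_by_poly_of Dspace_admissible)

lemma acts_by_fst_scale: "x \<in> Dspace \<Longrightarrow> acts_by (fst (pair_scale s c x)) (smult c (poly_of x))"
  by (simp add: acts_by_scale acts_by_poly_of Dspace_admissible)

lemma bilinear_on_drD: "bilinear_on (pair_scale s) Dspace drD"
  unfolding bilinear_on_def
proof (intro conjI ballI allI)
  fix x y z assume D: "x \<in> Dspace" "y \<in> Dspace" "z \<in> Dspace"
  show "drD x y \<in> Dspace" by (rule drD_Dspace[OF D(2)])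
  show "drD (x + y) z = drD x z + drD y z"
    using D by (simp add: drD_eq[OF Dspace_add _ acts_by_fst_add] pairs.poly_op_add) (simp add: drD_def)
  show "drD z (x + y) = drD z x + drD z y"
    by (simp add: drD_def pairs.linear_endo_add[OF pairs.linear_endo_poly_op[OF linear_endo_UL]])
  fix c
  show "drD (pair_scale s c x) y = pair_scale s c (drD x y)"
    using D by (simp add: drD_eq[OF Dspace_scale _ acts_by_fst_scale] pairs.poly_op_smult) (simp add: drD_def)
  show "drD x (pair_scale s c y) = pair_scale s c (drD x y)"
    by (simp add: drD_def pairs.linear_endo_scale[OF pairs.linear_endo_poly_op[OF linear_endo_UL]])
qed

lemma bilinear_on_dlD: "bilinear_on (pair_scale s) Dspace dlD"
  unfolding bilinear_on_def
proof (intro conjI ballI allI)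
  fix x y z assume D: "x \<in> Dspace" "y \<in> Dspace" "z \<in> Dspace"
  show "dlD x y \<in> Dspace" by (rule dlD_Dspace[OF D(1)])
  show "dlD (x + y) z = dlD x z + dlD y z"
    by (simp add: dlD_def pairs.linear_endo_add[OF pairs.linear_endo_poly_op[OF linear_endo_UR]])
  show "dlD z (x + y) = dlD z x + dlD z y"
    using D by (simp add: dlD_eq[OF Dspace_add _ acts_by_fst_add] pairs.poly_op_add) (simp add: dlD_def)
  fix c
  show "dlD (pair_scale s c x) y = pair_scale s c (dlD x y)"
    by (simp add: dlD_def pairs.linear_endo_scale[OF pairs.linear_endo_poly_op[OF linear_endo_UR]])
  show "dlD x (pair_scale s c y) = pair_scale s c (dlD x y)"
    using D by (simp add: dlD_eq[OF Dspace_scale _ acts_by_fst_scale] pairs.poly_op_smult) (simp add: dlD_def)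
qed

lemma subspace_on_Dspace: "subspace_on (pair_scale s) Dspace"
  by (simp add: subspace_on_def Dspace_0 Dspace_add Dspace_scale)

theorem assoc_dialgebra_on_Dspace: "assoc_dialgebra_on (pair_scale s) Dspace dlD drD"
  unfolding assoc_dialgebra_on_def zero_dialgebra_on_def
proof (intro conjI ballI pairs.vector_space_axioms subspace_on_Dspace bilinear_on_dlD bilinear_on_drD)
  fix x y z assume D: "x \<in> Dspace" "y \<in> Dspace" "z \<in> Dspace"
  note drD_prod = drD_eq[OF drD_Dspace _ acts_by_fst_drD] and dlD_prod = dlD_eq[OF dlD_Dspace _ acts_by_fst_dlD]
  show "drD (dlD x y) z = drD (drD x y) z"
    by (simp add: D drD_eq[OF dlD_Dspace _ acts_by_fst_dlD] drD_prod mult.commute)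
  show "dlD x (drD y z) = dlD x (dlD y z)"
    by (simp add: D dlD_eq[OF drD_Dspace _ acts_by_fst_drD] dlD_prod mult.commute)
  show "drD (drD x y) z = drD x (drD y z)"
    using D by (simp add: drD_prod pairs.poly_op_mult[OF linear_endo_UL]) (simp add: drD_def)
  show "dlD (dlD x y) z = dlD x (dlD y z)"
    using D by (simp add: dlD_prod pairs.poly_op_mult[OF linear_endo_UR]) (simp add: dlD_def)
  show "dlD (drD x y) z = drD x (dlD y z)"
    unfolding dlD_def drD_def
    by (rule pairs.poly_op_commute[OF pairs.linear_endo_poly_op[OF linear_endo_UR]])
      (rule pairs.poly_op_commute[where S = UL and T = UR, OF linear_endo_UL UL_UR_commute, symmetric])
qed

lemma UL_pow_lift: "(UL ^^ j) (lift y) = (cheb j y, cheb (Suc j) y)"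
  by (induction j) (simp_all add: lift_def UL_def cheb.simps(3))

lemma UR_pow_lift: "(UR ^^ j) (lift y) = (cheb j y, Ra (cheb j y) + Ra (cheb j y) - cheb (Suc j) y)"
  by (induction j) (simp_all add: lift_def UR_def cheb.simps(3))

lemma fst_poly_comb: "(\<And>n. fst (F n m) = G n y) \<Longrightarrow> fst (pairs.poly_comb p F m) = poly_comb p G y"
  by (simp add: pairs.poly_comb_def poly_comb_def fst_sum)

lemma snd_poly_comb: "(\<And>n. snd (F n m) = G n y) \<Longrightarrow> snd (pairs.poly_comb p F m) = poly_comb p G y"
  by (simp add: pairs.poly_comb_def poly_comb_def snd_sum)

lemma poly_op_UL_lift: "pairs.poly_op p UL (lift y) = (poly_comb p cheb y, poly_comb p (\<lambda>n. cheb (Suc n)) y)"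
  unfolding pairs.poly_op_def
  by (rule prod_eqI) (simp_all add: fst_poly_comb[where G = cheb] snd_poly_comb[where G = "\<lambda>n. cheb (Suc n)"]
      UL_pow_lift)

lemma poly_op_UR_lift:
  "pairs.poly_op p UR (lift y)
    = (poly_comb p cheb y, Ra (poly_comb p cheb y) + Ra (poly_comb p cheb y) - poly_comb p (\<lambda>n. cheb (Suc n)) y)"
proof -
  have "snd (pairs.poly_op p UR (lift y)) = poly_comb p (\<lambda>n w. Ra (cheb n w) + Ra (cheb n w) - cheb (Suc n) w) y"
    unfolding pairs.poly_op_def by (rule snd_poly_comb) (simp add: UR_pow_lift)
  also have "\<dots> = Ra (poly_comb p cheb y) + Ra (poly_comb p cheb y) - poly_comb p (\<lambda>n. cheb (Suc n)) y"
    by (simp only: poly_comb_fun_add poly_comb_fun_diff poly_comb_linear_image[OF linear_endo_Ra])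
  finally show ?thesis
    unfolding pairs.poly_op_def by (intro prod_eqI) (simp_all add: fst_poly_comb[where G = cheb] UR_pow_lift)
qed

lemma lift_Dspace:
  assumes "acts_by y h"
  shows "lift y \<in> Dspace"
proof -
  have "lift y \<in> admissible"
    using assms acts_by_Ra[OF assms] by (auto simp: admissible_def lift_def)
  moreover have "pairs.poly_op p UL (lift y) = 0 \<and> pairs.poly_op p UR (lift y) = 0" if "p \<in> null_polys" for p
  proof -
    have "poly_comb p (\<lambda>n. cheb (n + j)) z = 0" for j z
      using acts_byD[of 0 p z j] that by (simp add: null_polys_def linear_endo_0[OF linear_endo_Ra_pow])
    from this[of 0 y] this[of 1 y] show ?thesis
      by (simp add: poly_op_UL_lift poly_op_UR_lift linear_endo_0[OF linear_endo_Ra] zero_prod_def)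
  qed
  ultimately show ?thesis by (simp add: Dspace_def)
qed

lemma lift_dl:
  assumes "acts_by x hx" "acts_by y hy"
  shows "lift (x \<stileturn> y) = pair_scale s (1/2) (dlD (lift x) (lift y) + drD (lift y) (lift x))"
proof -
  have half: "s (1/2) (v + v) = v" for v
  proof -
    have "s (1/2) (v + v) = s (1/2 + 1/2) v"
      by (simp only: scale_right_distrib scale_left_distrib)
    then show ?thesis by simp
  qed
  have fst: "acts_by (fst (lift y)) hy" using assms(2) by (simp add: lift_def)
  have "dlD (lift x) (lift y) = pairs.poly_op hy UR (lift x)"
    by (rule dlD_eq[OF lift_Dspace[OF assms(2)] lift_Dspace[OF assms(1)] fst])
  moreover have "drD (lift y) (lift x) = pairs.poly_op hy UL (lift x)"
    by (rule drD_eq[OF lift_Dspace[OF assms(2)] lift_Dspace[OF assms(1)] fst])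
  moreover have "poly_comb hy cheb x = x \<stileturn> y"
    by (rule dl_eq_poly_comb_cheb[OF assms(2), symmetric])
  ultimately show ?thesis
    by (simp only: poly_op_UL_lift poly_op_UR_lift) (simp add: pair_scale_def lift_def half)
qed

theorem special_if_all_act:
  assumes "\<And>y. \<exists>h. acts_by y h"
  shows "special_dialgebra s (\<stileturn>) (\<lambda>x y. y \<stileturn> x)"
proof (rule special_dialgebra_if_embeds_into_pairs[OF vector_space_axioms assoc_dialgebra_on_Dspace])
  show "inj lift" by (rule injI) (simp add: lift_def)
  show "range lift \<subseteq> Dspace" using assms lift_Dspace by blast
  show "lift (x + y) = lift x + lift y" for x y
    by (simp add: lift_def linear_endo_add[OF linear_endo_Ra])
  show "lift (s c x) = pair_scale s c (lift x)" for c x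
    by (simp add: lift_def pair_scale_def linear_endo_scale[OF linear_endo_Ra])
  show "lift (x \<stileturn> y) = pair_scale s (1/2) (dlD (lift x) (lift y) + drD (lift y) (lift x))" for x y
    using assms lift_dl by blast
  show "lift (y \<stileturn> x) = pair_scale s (1/2) (drD (lift x) (lift y) + dlD (lift y) (lift x))" for x y
    using assms lift_dl by (metis add.commute)
qed

end

theorem mainTheorem3:
  fixes s :: "'k::field_char_0 \<Rightarrow> 'v::ab_group_add \<Rightarrow> 'v"
    and dl dr :: "'v \<Rightarrow> 'v \<Rightarrow> 'v"
  assumes "jordan_dialgebra_on s UNIV dl dr"
    and "\<exists>a. generated s dl dr {a} = UNIV"
  shows "special_dialgebra s dl dr"
proof -
  obtain a where gen: "generated s dl dr {a} = UNIV"
    using assms(2) by blast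
  have "\<forall>x y. dr x y = dl y x"
    using assms(1) by (simp add: jordan_dialgebra_on_def)
  then have dr: "dr = (\<lambda>x y. dl y x)"
    by (simp add: fun_eq_iff)
  interpret jordan_identities_at s dl a
    using assms(1) unfolding dr by (rule jordan_identities_at_if_jordan_dialgebra)
  have "\<exists>h. acts_by y h" for y
    using acts_by_generated gen unfolding dr by blast
  then show ?thesis
    unfolding dr by (rule special_if_all_act)
qed

end
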